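(* For every integer $k\geq 0$, $$d_{\mathcal F}\!\left(\frac{F_{k+1}}{F_k},\,\infty\right)=\lfloor k/2\rfloor+1,$$ where $(F_j)$ are the Fibonacci numbers indexed so that $F_0=F_1=1$ and $F_{j+1}=F_j+F_{j-1}$ (so $\frac{F_{k+1}}{F_k}=\frac11,\frac21,\frac32,\frac53,\dots$ for $k=0,1,2,3,\dots$), and $\infty=\frac10$.
   Context: The Farey graph has vertex set $\mathbb Q\cup\{\infty\}$, where each element is written in lowest terms $\frac ab$ ($\infty=\frac10$), and an edge between $\frac ab$ and $\frac cd$ exactly when $|ad-bc|=1$. (Equivalently, vertices are slopes of a torus, adjacent when they have representatives meeting transversely in one point.) $d_{\mathcal F}$ denotes the path-length distance in the Farey graph. *)

theory Defs
  imports Complex_Main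
begin

text \<open>Vertices of the Farey graph: \<open>Q \<union> {\<infinity>}\<close>, encoded as \<open>rat option\<close>
  with \<open>None\<close> playing the role of \<open>\<infinity> = 1/0\<close>.\<close>
type_synonym farey_vertex = "rat option"

abbreviation farey_inf :: farey_vertex where "farey_inf \<equiv> None"

definition farey_rep :: "farey_vertex \<Rightarrow> int \<times> int" where
  "farey_rep v = (case v of None \<Rightarrow> (1, 0) | Some q \<Rightarrow> quotient_of q)"

definition farey_adj :: "farey_vertex \<Rightarrow> farey_vertex \<Rightarrow> bool" where
  "farey_adj u v = (case farey_rep u of (a, b) \<Rightarrow> case farey_rep v of (c, d) \<Rightarrow>
      \<bar>a * d - b * c\<bar> = 1)"

definition farey_dist :: "farey_vertex \<Rightarrow> farey_vertex \<Rightarrow> nat" where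
  "farey_dist u v = (LEAST n. (farey_adj ^^ n) u v)"

fun F :: "nat \<Rightarrow> nat" where
  "F 0 = 1"
| "F (Suc 0) = 1"
| "F (Suc (Suc n)) = F (Suc n) + F n"

end

theory Submission
  imports Defs
begin

text \<open>Write \<open>x k = F (k + 1) / F k\<close>. By Cassini's identity \<open>x (k + 2)\<close> is Farey-adjacent to
  \<open>x k\<close> and lies strictly between the Farey neighbours \<open>x k\<close> and \<open>x (k + 1)\<close>; since \<open>x 0 = 1\<close>
  and \<open>x 1 = 2\<close> are adjacent to \<open>\<infinity>\<close>, the walk \<open>x k, x (k - 2), \<dots>, \<infinity>\<close> gives the upper bound.
  For the lower bound, a vertex \<open>x/y\<close> strictly inside the interval spanned by Farey neighbours
  \<open>p/q < r/s\<close> satisfies \<open>(x, y) = \<alpha> (p, q) + \<beta> (r, s)\<close> with integers \<open>\<alpha>, \<beta> \<ge> 1\<close>. Hence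
  \<open>y \<ge> 2\<close>, and a vertex outside the closed interval has cross-determinant with \<open>x/y\<close> of
  absolute value at least \<open>\<alpha> + \<beta> \<ge> 2\<close>. So every walk from an interior vertex to \<open>\<infinity>\<close> passes
  through \<open>p/q\<close> or \<open>r/s\<close>, which yields
  \<open>d (x (k + 2)) \<infinity> \<ge> 1 + min (d (x k) \<infinity>) (d (x (k + 1)) \<infinity>)\<close>.\<close>

lemma abs_lin_comb_same_sign_ge_2:
  fixes \<alpha> \<beta> m n :: int
  assumes "\<alpha> \<ge> 1" "\<beta> \<ge> 1" "m \<ge> 1 \<and> n \<ge> 1 \<or> m \<le> -1 \<and> n \<le> -1"
  shows "\<bar>\<alpha> * m + \<beta> * n\<bar> \<ge> 2"
  using assms(3)
proof
  assume "m \<ge> 1 \<and> n \<ge> 1"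
  then have "\<alpha> * m \<ge> \<alpha>" "\<beta> * n \<ge> \<beta>"
    using assms(1,2) mult_left_mono[of 1 _ \<alpha>] mult_left_mono[of 1 _ \<beta>] by auto
  then show ?thesis using assms(1,2) by linarith
next
  assume "m \<le> -1 \<and> n \<le> -1"
  then have "\<alpha> * m \<le> - \<alpha>" "\<beta> * n \<le> - \<beta>"
    using assms(1,2) mult_left_mono[of _ "-1" \<alpha>] mult_left_mono[of _ "-1" \<beta>] by auto
  then show ?thesis using assms(1,2) by linarith
qed

lemma quotient_of_int_div:
  assumes "b > 0" "coprime a b"
  shows "quotient_of (of_int a / of_int b) = (a, b)"
  using assms by (simp add: Fract_of_int_quotient[symmetric] quotient_of_Fract normalize_def)

lemma of_int_div_less_of_int_div_iff:
  fixes a b c d :: int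
  assumes "b > 0" "d > 0"
  shows "(of_int a / of_int b < (of_int c / of_int d :: rat)) \<longleftrightarrow> a * d < c * b"
proof -
  have "(of_int a / of_int b < (of_int c / of_int d :: rat)) \<longleftrightarrow>
      (of_int (a * d) < (of_int (c * b) :: rat))"
    using assms by (simp add: field_simps)
  then show ?thesis by (simp only: of_int_less_iff)
qed

lemma farey_interval_interior_decomp:
  fixes p q r s x y :: int
  assumes q: "q > 0" and s: "s > 0" and y: "y > 0" and det: "q * r - p * s = 1"
    and lo: "of_int p / of_int q < (of_int x / of_int y :: rat)"
    and hi: "of_int x / of_int y < (of_int r / of_int s :: rat)"
  obtains \<alpha> \<beta> where "\<alpha> \<ge> 1" "\<beta> \<ge> 1" "x = \<alpha> * p + \<beta> * r" "y = \<alpha> * q + \<beta> * s"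
proof
  show "r * y - s * x \<ge> 1"
    using hi of_int_div_less_of_int_div_iff[OF y s] by (simp add: mult.commute)
  show "q * x - p * y \<ge> 1"
    using lo of_int_div_less_of_int_div_iff[OF q y] by (simp add: mult.commute)
  have "x = x * (q * r - p * s)" "y = y * (q * r - p * s)" using det by simp_all
  then show "x = (r * y - s * x) * p + (q * x - p * y) * r"
    and "y = (r * y - s * x) * q + (q * x - p * y) * s"
    by (simp_all add: algebra_simps)
qed

lemma farey_adj_interior:
  fixes p q r s :: int and t :: rat
  assumes q: "q > 0" and s: "s > 0" and det: "q * r - p * s = 1"
    and lo: "of_int p / of_int q < t" and hi: "t < of_int r / of_int s"
    and adj: "farey_adj (Some t) w"
  shows "\<exists>u. w = Some u \<and> of_int p / of_int q \<le> u \<and> u \<le> of_int r / of_int s"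
proof -
  obtain x y where qt: "quotient_of t = (x, y)" by force
  have y: "y > 0" and t: "t = of_int x / of_int y"
    using quotient_of_denom_pos[OF qt] quotient_of_div[OF qt] by auto
  obtain \<alpha> \<beta> where \<alpha>: "\<alpha> \<ge> 1" and \<beta>: "\<beta> \<ge> 1"
    and x_eq: "x = \<alpha> * p + \<beta> * r" and y_eq: "y = \<alpha> * q + \<beta> * s"
    using farey_interval_interior_decomp[OF q s y det] lo hi t by metis
  show ?thesis
  proof (cases w)
    case None
    have "\<alpha> * q \<ge> 1" "\<beta> * s \<ge> 1"
      using \<alpha> \<beta> q s mult_mono[of 1 \<alpha> 1 q] mult_mono[of 1 \<beta> 1 s] by simp_all
    then have "y \<noteq> 1" using y_eq by linarith
    then show ?thesis using adj qt None y by (simp add: farey_adj_def farey_rep_def)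
  next
    case (Some u)
    obtain c d where qu: "quotient_of u = (c, d)" by force
    have d: "d > 0" and u: "u = of_int c / of_int d"
      using quotient_of_denom_pos[OF qu] quotient_of_div[OF qu] by auto
    have "\<bar>x * d - y * c\<bar> = 1" using adj qt qu Some by (simp add: farey_adj_def farey_rep_def)
    moreover have "x * d - y * c = \<alpha> * (p * d - q * c) + \<beta> * (r * d - s * c)"
      by (simp add: x_eq y_eq algebra_simps)
    ultimately have "\<not> (\<bar>\<alpha> * (p * d - q * c) + \<beta> * (r * d - s * c)\<bar> \<ge> 2)" by simp
    then have same_sign: "\<not> (p * d - q * c \<ge> 1 \<and> r * d - s * c \<ge> 1 \<or>
        p * d - q * c \<le> -1 \<and> r * d - s * c \<le> -1)"
      using abs_lin_comb_same_sign_ge_2[OF \<alpha> \<beta>] by blast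
    have pr: "of_int p / of_int q < (of_int r / of_int s :: rat)"
      using det of_int_div_less_of_int_div_iff[OF q s] by (simp add: mult.commute)
    have "\<not> u < of_int p / of_int q"
    proof
      assume "u < of_int p / of_int q"
      moreover from this have "u < of_int r / of_int s" using pr by order
      ultimately have "p * d - q * c \<ge> 1 \<and> r * d - s * c \<ge> 1"
        using u of_int_div_less_of_int_div_iff[OF d q] of_int_div_less_of_int_div_iff[OF d s]
        by (simp add: mult.commute)
      with same_sign show False by blast
    qed
    moreover have "\<not> of_int r / of_int s < u"
    proof
      assume "of_int r / of_int s < u"
      moreover from this have "of_int p / of_int q < u" using pr by order
      ultimately have "p * d - q * c \<le> -1 \<and> r * d - s * c \<le> -1"
        using u of_int_div_less_of_int_div_iff[OF q d] of_int_div_less_of_int_div_iff[OF s d]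
        by (simp add: mult.commute)
      with same_sign show False by blast
    qed
    ultimately show ?thesis using Some by (simp add: not_less)
  qed
qed

lemma farey_walk_to_inf_through_endpoint:
  fixes p q r s :: int
  assumes q: "q > 0" and s: "s > 0" and det: "q * r - p * s = 1"
  shows "(farey_adj ^^ n) (Some t) None \<Longrightarrow>
    of_int p / of_int q < t \<Longrightarrow> t < of_int r / of_int s \<Longrightarrow>
    \<exists>m<n. (farey_adj ^^ m) (Some (of_int p / of_int q)) None \<or>
          (farey_adj ^^ m) (Some (of_int r / of_int s)) None"
proof (induction n arbitrary: t)
  case 0
  then show ?case by simp
next
  case (Suc n)
  obtain w where w: "farey_adj (Some t) w" "(farey_adj ^^ n) w None"
    using relpowp_Suc_D2[OF Suc.prems(1)] by blast
  obtain u where u: "w = Some u" "of_int p / of_int q \<le> u" "u \<le> of_int r / of_int s"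
    using farey_adj_interior[OF q s det Suc.prems(2,3) w(1)] by blast
  show ?case
  proof (cases "u = of_int p / of_int q \<or> u = of_int r / of_int s")
    case True
    then show ?thesis using w(2) u(1) by auto
  next
    case False
    then have "of_int p / of_int q < u" "u < of_int r / of_int s" using u by auto
    then show ?thesis using Suc.IH[OF w(2)[unfolded u(1)]] less_SucI by blast
  qed
qed

lemma farey_walk_to_inf_through_neighbour:
  fixes a b c d :: int and t :: rat
  assumes b: "b > 0" and d: "d > 0" and det: "\<bar>a * d - b * c\<bar> = 1"
    and between: "0 < (t - of_int a / of_int b) * (of_int c / of_int d - t)"
    and walk: "(farey_adj ^^ n) (Some t) None"
  shows "\<exists>m<n. (farey_adj ^^ m) (Some (of_int a / of_int b)) None \<or>
               (farey_adj ^^ m) (Some (of_int c / of_int d)) None"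
proof -
  consider "d * a - c * b = 1" | "b * c - a * d = 1"
    using det mult.commute[of a d] mult.commute[of c b] by linarith
  then show ?thesis
  proof cases
    case 1
    then have "of_int c / of_int d < (of_int a / of_int b :: rat)"
      using of_int_div_less_of_int_div_iff[OF d b] by (simp add: mult.commute)
    then have "of_int c / of_int d < t" "t < of_int a / of_int b"
      using between by (auto simp: zero_less_mult_iff)
    then show ?thesis using farey_walk_to_inf_through_endpoint[OF d b 1 walk] by blast
  next
    case 2
    then have "of_int a / of_int b < (of_int c / of_int d :: rat)"
      using of_int_div_less_of_int_div_iff[OF b d] by (simp add: mult.commute)
    then have "of_int a / of_int b < t" "t < of_int c / of_int d"
      using between by (auto simp: zero_less_mult_iff)
    then show ?thesis using farey_walk_to_inf_through_endpoint[OF b d 2 walk] by blast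
  qed
qed

lemma F_pos: "F k > 0"
  by (induction k rule: F.induct) auto

lemma coprime_F_Suc: "coprime (F (Suc k)) (F k)"
proof (induction k)
  case 0
  then show ?case by simp
next
  case (Suc k)
  have "gcd (F (Suc k)) (F (Suc k) + F k) = gcd (F (Suc k)) (F k)"
    by (rule gcd_add2)
  then show ?case using Suc by (simp add: coprime_iff_gcd_eq_1 add.commute gcd.commute)
qed

lemma F_Cassini:
  "of_nat (F (Suc (Suc k))) * of_nat (F k) - of_nat (F (Suc k))^2 = ((-1)^k :: 'a :: comm_ring_1)"
  by (induction k) (simp_all add: algebra_simps power2_eq_square)

lemma F_shifted_Cassini:
  "of_nat (F (Suc (Suc (Suc k)))) * of_nat (F k) - of_nat (F (Suc (Suc k))) * of_nat (F (Suc k))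
    = ((-1)^k :: 'a :: comm_ring_1)"
  using F_Cassini[of k, where 'a='a] by (simp add: algebra_simps power2_eq_square)

definition fib_ratio :: "nat \<Rightarrow> rat" where
  "fib_ratio k = of_nat (F (Suc k)) / of_nat (F k)"

lemma quotient_of_fib_ratio: "quotient_of (fib_ratio k) = (int (F (Suc k)), int (F k))"
  using quotient_of_int_div[of "int (F k)" "int (F (Suc k))"] F_pos[of k] coprime_F_Suc[of k]
  by (simp add: fib_ratio_def coprime_int_iff)

lemma farey_adj_fib_ratio_inf: "k < 2 \<Longrightarrow> farey_adj (Some (fib_ratio k)) None"
  using quotient_of_fib_ratio[of k]
  by (cases k; cases "k - 1") (auto simp: farey_adj_def farey_rep_def)

lemma farey_adj_fib_ratio_Suc_Suc:
  "farey_adj (Some (fib_ratio (Suc (Suc k)))) (Some (fib_ratio k))"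
  using F_shifted_Cassini[of k, where 'a=int] quotient_of_fib_ratio[of k]
    quotient_of_fib_ratio[of "Suc (Suc k)"]
  by (simp add: farey_adj_def farey_rep_def)

lemma fib_ratio_Suc_Suc_between:
  "0 < (fib_ratio (Suc (Suc k)) - fib_ratio k) * (fib_ratio (Suc k) - fib_ratio (Suc (Suc k)))"
proof -
  have pos: "(0::rat) < of_nat (F i)" for i using F_pos[of i] by simp
  have "fib_ratio (Suc (Suc k)) - fib_ratio k =
      (-1)^k / (of_nat (F (Suc (Suc k))) * of_nat (F k))"
    using F_shifted_Cassini[of k, where 'a=rat] pos[of k] pos[of "Suc (Suc k)"]
    by (simp add: fib_ratio_def diff_frac_eq algebra_simps)
  moreover have "fib_ratio (Suc k) - fib_ratio (Suc (Suc k)) =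
      (-1)^k / (of_nat (F (Suc k)) * of_nat (F (Suc (Suc k))))"
    using F_Cassini[of "Suc k", where 'a=rat] pos[of "Suc k"] pos[of "Suc (Suc k)"]
    by (simp add: fib_ratio_def diff_frac_eq algebra_simps power2_eq_square)
  moreover have "(-1)^k * (-1)^k = (1::rat)" by (simp flip: power_add)
  ultimately show ?thesis using pos[of k] pos[of "Suc k"] pos[of "Suc (Suc k)"]
    by (simp del: F.simps)
qed

lemma farey_walk_fib_ratio_inf: "(farey_adj ^^ (k div 2 + 1)) (Some (fib_ratio k)) None"
proof (induction k rule: F.induct)
  case 1
  show ?case using relpowp_Suc_I2[of farey_adj, OF farey_adj_fib_ratio_inf relpowp_0_I] by simp
next
  case 2
  show ?case using relpowp_Suc_I2[of farey_adj, OF farey_adj_fib_ratio_inf relpowp_0_I] by simp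
next
  case (3 k)
  have "Suc (Suc k) div 2 + 1 = Suc (k div 2 + 1)" by simp
  with relpowp_Suc_I2[of farey_adj, OF farey_adj_fib_ratio_Suc_Suc "3.IH"(2)] show ?case
    by (simp only:)
qed

lemma farey_walk_fib_ratio_inf_length:
  "(farey_adj ^^ n) (Some (fib_ratio k)) None \<Longrightarrow> k div 2 + 1 \<le> n"
proof (induction k arbitrary: n rule: F.induct)
  case 1
  then show ?case by (cases n) auto
next
  case 2
  then show ?case by (cases n) auto
next
  case (3 j)
  have "\<bar>int (F (Suc j)) * int (F (Suc j)) - int (F j) * int (F (Suc (Suc j)))\<bar> = 1"
    using F_Cassini[of j, where 'a=int] by (simp add: power2_eq_square algebra_simps)
  then obtain m where "m < n"
    and "(farey_adj ^^ m) (Some (fib_ratio j)) None \<or>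
      (farey_adj ^^ m) (Some (fib_ratio (Suc j))) None"
    using farey_walk_to_inf_through_neighbour[where a = "int (F (Suc j))" and b = "int (F j)"
        and c = "int (F (Suc (Suc j)))" and d = "int (F (Suc j))", OF _ _ _ _ "3.prems"]
      F_pos[of j] F_pos[of "Suc j"]
      fib_ratio_Suc_Suc_between[of j]
    by (fastforce simp: fib_ratio_def simp del: F.simps)
  then have "j div 2 + 1 \<le> m" using "3.IH"[of m] by fastforce
  with \<open>m < n\<close> show ?case by simp
qed

theorem lemma4p5:
  fixes k :: nat
  shows "farey_dist (Some (of_nat (F (k + 1)) / of_nat (F k))) farey_inf = k div 2 + 1"
proof -
  have "of_nat (F (k + 1)) / of_nat (F k) = fib_ratio k" by (simp add: fib_ratio_def)
  then show ?thesis
    unfolding farey_dist_def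
    using farey_walk_fib_ratio_inf farey_walk_fib_ratio_inf_length by (simp add: Least_equality)
qed

end
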